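(* Let $A\in\mathbb{C}^{n\times n}$, $B\in\mathbb{C}^{n\times m}$, $C\in\mathbb{C}^{p\times n}$, $D\in\mathbb{C}^{p\times m}$, $F\in\mathbb{C}^{\nu\times\nu}$ with $\mathrm{eig}(A)\cap\mathrm{eig}(F)=\emptyset$, and let $H\in\mathbb{C}^{m\times\nu}$ be such that $(F,H)$ is observable. Let $\hat B\in\mathbb{C}^{\nu\times m}$ and $\hat D\in\mathbb{C}^{p\times m}$, and define $\hat A=F-\hat BH$ and $\hat C=\mathcal{C}_{\rm p}(H)-\hat DH$. Suppose $\mathrm{eig}(\hat A)\cap\mathrm{eig}(F)=\emptyset$ and that the matrix $$\begin{bmatrix}F-\lambda I_\nu & \hat B\\ \mathcal{C}_{\rm p}(H) & \hat D\end{bmatrix}$$ has full column rank for every $\lambda\in\mathrm{eig}(\hat A)$. Then the pair $(\hat A,\hat C)$ is observable.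
   Context: The primal SSC operator: for $H\in\mathbb{C}^{m\times\nu}$, $\mathcal{C}_{\rm p}(H)=C\Pi+DH$, where $\Pi\in\mathbb{C}^{n\times\nu}$ is the unique solution of $\Pi F-A\Pi=BH$. *)

theory Defs
  imports "Jordan_Normal_Form.Spectral_Radius" "Jordan_Normal_Form.DL_Rank"
begin

definition full_col_rank :: "complex mat \<Rightarrow> bool" where
  "full_col_rank M \<longleftrightarrow> vec_space.rank (dim_row M) M = dim_col M"

fun obs_stack :: "complex mat \<Rightarrow> complex mat \<Rightarrow> nat \<Rightarrow> complex mat" where
  "obs_stack A C 0 = C"
| "obs_stack A C (Suc k) = obs_stack A C k @\<^sub>r (C * A ^\<^sub>m Suc k)"

definition obs_matrix :: "complex mat \<Rightarrow> complex mat \<Rightarrow> complex mat" where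
  "obs_matrix A C = obs_stack A C (dim_row A - 1)"

definition observable :: "complex mat \<Rightarrow> complex mat \<Rightarrow> bool" where
  "observable A C \<longleftrightarrow> A \<in> carrier_mat (dim_row A) (dim_row A) \<and> dim_col C = dim_row A
     \<and> vec_space.rank (dim_row (obs_matrix A C)) (obs_matrix A C) = dim_row A"

definition sylv_Pi :: "complex mat \<Rightarrow> complex mat \<Rightarrow> complex mat \<Rightarrow> complex mat \<Rightarrow> complex mat" where
  "sylv_Pi A B F H = (THE Pi. Pi \<in> carrier_mat (dim_row A) (dim_row F) \<and> Pi * F - A * Pi = B * H)"

(* primal SSC operator C_p(H) = C Pi + D H *)
definition primal_ssc :: "complex mat \<Rightarrow> complex mat \<Rightarrow> complex mat \<Rightarrow> complex mat \<Rightarrow> complex mat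
    \<Rightarrow> complex mat \<Rightarrow> complex mat" where
  "primal_ssc A B C D F H = C * sylv_Pi A B F H + D * H"

end

theory Submission
  imports Defs
begin

text \<open>Only the rank condition matters: it is the Popov--Belevitch--Hautus test in disguise.
Write \<open>A' = F - Bh H\<close> and \<open>C' = K - Dh H\<close> with \<open>K = C\<^sub>p(H)\<close>. If \<open>(A', C')\<close> were not observable, some eigenvector
\<open>u\<close> of \<open>A'\<close> with eigenvalue \<open>\<lambda>\<close> would satisfy \<open>C' u = 0\<close>; then \<open>(u, -H u)\<close> lies in the kernel
of \<open>[F - \<lambda> I, Bh; K, Dh]\<close>, contradicting full column rank. The eigenvector comes from a nonzero
\<open>v\<close> in the kernel of the observability matrix: \<open>v, A' v, \<dots>, A'\<^sup>n v\<close> are dependent, and applying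
the linear factors of the resulting annihilating polynomial over \<open>\<complex>\<close> to \<open>v\<close> one at a time
produces an eigenvector that is still killed by \<open>C'\<close>.\<close>

(* p(A) w, computed by Horner's rule directly on vectors *)
definition poly_mat_vec :: "'a :: field mat \<Rightarrow> 'a poly \<Rightarrow> 'a vec \<Rightarrow> 'a vec" where
  "poly_mat_vec A p w = fold_coeffs (\<lambda>a x. a \<cdot>\<^sub>v w + A *\<^sub>v x) p (0\<^sub>v (dim_row A))"

context
  fixes A :: "'a :: field mat" and n :: nat
  assumes A: "A \<in> carrier_mat n n"
begin

lemma poly_mat_vec_0 [simp]: "poly_mat_vec A 0 w = 0\<^sub>v n"
  using A unfolding poly_mat_vec_def by simp

lemma poly_mat_vec_pCons:
  assumes w: "w \<in> carrier_vec n"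
  shows "poly_mat_vec A (pCons a p) w = a \<cdot>\<^sub>v w + A *\<^sub>v poly_mat_vec A p w"
proof (cases "p = 0")
  case True
  then show ?thesis
    using A w unfolding poly_mat_vec_def by (cases "a = 0") (auto intro!: eq_vecI)
qed (simp add: poly_mat_vec_def)

lemma poly_mat_vec_carrier [simp]: "w \<in> carrier_vec n \<Longrightarrow> poly_mat_vec A p w \<in> carrier_vec n"
  by (induct p) (use A in \<open>auto simp: poly_mat_vec_pCons\<close>)

lemma poly_mat_vec_add:
  assumes w: "w \<in> carrier_vec n"
  shows "poly_mat_vec A (p + q) w = poly_mat_vec A p w + poly_mat_vec A q w"
proof (induct p q rule: poly_induct2)
  case (pCons a p b q)
  then show ?case
    using A w by (auto simp: poly_mat_vec_pCons mult_add_distrib_mat_vec[OF A] distrib_right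
        intro!: eq_vecI)
qed simp

lemma poly_mat_vec_smult:
  assumes w: "w \<in> carrier_vec n"
  shows "poly_mat_vec A (Polynomial.smult c p) w = c \<cdot>\<^sub>v poly_mat_vec A p w"
  by (induct p) (use A w in \<open>auto simp: poly_mat_vec_pCons mult_mat_vec[OF A] algebra_simps
      intro!: eq_vecI\<close>)

lemma poly_mat_vec_mult:
  assumes w: "w \<in> carrier_vec n"
  shows "poly_mat_vec A (q * p) w = poly_mat_vec A q (poly_mat_vec A p w)"
proof (induct q)
  case (pCons a q)
  have "pCons a q * p = Polynomial.smult a p + pCons 0 (q * p)"
    by (simp add: mult_pCons_left)
  with pCons show ?case
    using A w by (auto simp: poly_mat_vec_add poly_mat_vec_smult poly_mat_vec_pCons intro!: eq_vecI)
qed simp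

lemma poly_mat_vec_1 [simp]: "w \<in> carrier_vec n \<Longrightarrow> poly_mat_vec A 1 w = w"
  using A by (auto simp: one_pCons poly_mat_vec_pCons)

lemma poly_mat_vec_linear_factor:
  assumes w: "w \<in> carrier_vec n"
  shows "poly_mat_vec A [:- a, 1:] w = A *\<^sub>v w - a \<cdot>\<^sub>v w"
proof -
  have "[:- a, 1:] = pCons (- a) 1"
    by simp
  then show ?thesis
    using A w by (auto simp only: poly_mat_vec_pCons poly_mat_vec_1 intro!: eq_vecI) auto
qed

lemma pow_mat_Suc_left: "A ^\<^sub>m Suc k = A * A ^\<^sub>m k"
proof (induction k)
  case (Suc k)
  have "A ^\<^sub>m Suc (Suc k) = (A * A ^\<^sub>m k) * A"
    by (simp only: pow_mat.simps(2)[of A "Suc k"] Suc)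
  also have "\<dots> = A * A ^\<^sub>m Suc k"
    using A by (simp add: assoc_mult_mat[of _ n n _ n _ n])
  finally show ?case .
qed (use A in simp)

lemma poly_mat_vec_Poly_index:
  assumes w: "w \<in> carrier_vec n" and i: "i < n"
  shows "poly_mat_vec A (Poly cs) w $ i = (\<Sum>j<length cs. cs ! j * (A ^\<^sub>m j *\<^sub>v w) $ i)"
  using i
proof (induction cs arbitrary: i)
  case (Cons c cs)
  have row: "(A *\<^sub>v v) $ i = (\<Sum>k<n. A $$ (i, k) * v $ k)" if "v \<in> carrier_vec n" for v
    using A Cons.prems that by (simp add: scalar_prod_def lessThan_atLeast0)
  have "poly_mat_vec A (Poly (c # cs)) w $ i
      = c * w $ i + (\<Sum>k<n. A $$ (i, k) * poly_mat_vec A (Poly cs) w $ k)"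
    using A w Cons.prems by (simp add: poly_mat_vec_pCons row del: index_mult_mat_vec)
  also have "\<dots> = c * w $ i + (\<Sum>k<n. A $$ (i, k) * (\<Sum>j<length cs. cs ! j * (A ^\<^sub>m j *\<^sub>v w) $ k))"
    using Cons.IH by simp
  also have "\<dots> = c * w $ i + (\<Sum>j<length cs. cs ! j * (\<Sum>k<n. A $$ (i, k) * (A ^\<^sub>m j *\<^sub>v w) $ k))"
    by (simp add: sum_distrib_left sum.swap[of _ "{..<n}"] mult.left_commute)
  also have "\<dots> = c * w $ i + (\<Sum>j<length cs. cs ! j * (A *\<^sub>v (A ^\<^sub>m j *\<^sub>v w)) $ i)"
    using A w by (simp add: row[OF mult_mat_vec_carrier[OF pow_carrier_mat[OF A] w]] del: index_mult_mat_vec)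
  also have "\<dots> = (\<Sum>j<length (c # cs). (c # cs) ! j * (A ^\<^sub>m j *\<^sub>v w) $ i)"
  proof -
    have "A ^\<^sub>m Suc j *\<^sub>v w = A *\<^sub>v (A ^\<^sub>m j *\<^sub>v w)" for j
      unfolding pow_mat_Suc_left using A w by (simp add: assoc_mult_mat_vec[of _ n n _ n])
    then show ?thesis
      using A w by (simp add: sum.lessThan_Suc_shift del: sum.lessThan_Suc index_mult_mat_vec)
  qed
  finally show ?case .
qed (use A in simp)

lemma krylov_annihilating_poly:
  assumes w: "w \<in> carrier_vec n"
  shows "\<exists>q. q \<noteq> 0 \<and> degree q \<le> n \<and> poly_mat_vec A q w = 0\<^sub>v n"
proof -
  \<comment> \<open>Row \<open>i < n\<close> holds the \<open>i\<close>-th coordinates of \<open>A\<^sup>j w\<close>; the extra zero row makes \<open>M\<close> square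
      and singular, and a kernel vector of \<open>M\<close> is the coefficient list of \<open>q\<close>.\<close>
  define M where "M = mat\<^sub>r (Suc n) (Suc n)
    (\<lambda>i. if i = n then 0\<^sub>v (Suc n) else vec (Suc n) (\<lambda>j. (A ^\<^sub>m j *\<^sub>v w) $ i))"
  have M: "M \<in> carrier_mat (Suc n) (Suc n)"
    unfolding M_def by simp
  have "det M = 0"
    unfolding M_def by (rule det_row_0) auto
  then obtain x where x: "x \<in> carrier_vec (Suc n)" "x \<noteq> 0\<^sub>v (Suc n)" "M *\<^sub>v x = 0\<^sub>v (Suc n)"
    using det_0_iff_vec_prod_zero_field[OF M] by blast
  define q where "q = Poly (list_of_vec x)"
  have coeff_q: "coeff q j = (if j < Suc n then x $ j else 0)" for j
    using x(1) by (simp add: q_def nth_default_def list_of_vec_index)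
  have "q \<noteq> 0"
  proof
    assume "q = 0"
    then have "x $ j = 0" if "j < Suc n" for j
      using coeff_q[of j] that by simp
    then have "x = 0\<^sub>v (Suc n)"
      using x(1) by (intro eq_vecI) auto
    with x(2) show False ..
  qed
  moreover have "degree q \<le> n"
    by (rule degree_le) (simp add: coeff_q)
  moreover have "poly_mat_vec A q w = 0\<^sub>v n"
  proof (rule eq_vecI)
    fix i
    assume "i < dim_vec (0\<^sub>v n :: 'a vec)"
    then have i: "i < n"
      by simp
    have "poly_mat_vec A q w $ i = (M *\<^sub>v x) $ i"
      using x(1) i unfolding q_def M_def
      by (simp add: poly_mat_vec_Poly_index[OF w i] scalar_prod_def list_of_vec_index
          lessThan_atLeast0 mult.commute)
    then show "poly_mat_vec A q w $ i = 0\<^sub>v n $ i"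
      using x(3) i by simp
  qed (use w in simp)
  ultimately show ?thesis
    by blast
qed

lemma eigenvector_in_kernel_of_annihilated:
  assumes C: "C \<in> carrier_mat p n" and w: "w \<in> carrier_vec n" "w \<noteq> 0\<^sub>v n"
    and ann: "poly_mat_vec A (\<Prod>a\<leftarrow>as. [:- a, 1:]) w = 0\<^sub>v n"
    and ker: "\<And>i. i < length as \<Longrightarrow> C *\<^sub>v (A ^\<^sub>m i *\<^sub>v w) = 0\<^sub>v p"
  shows "\<exists>lam u. eigenvector A u lam \<and> C *\<^sub>v u = 0\<^sub>v p"
  using w ann ker
proof (induction as arbitrary: w)
  \<comment> \<open>Apply the innermost factor \<open>A - a I\<close>: either it kills \<open>w\<close>, which is then the eigenvector,
      or its image is a shorter instance of the same situation.\<close>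
  case Nil
  then show ?case
    by simp
next
  case (Cons a as)
  define w' where "w' = A *\<^sub>v w - a \<cdot>\<^sub>v w"
  have w': "w' \<in> carrier_vec n"
    using A Cons.prems(1) by (simp add: w'_def)
  show ?case
  proof (cases "w' = 0\<^sub>v n")
    case True
    then have "A *\<^sub>v w = a \<cdot>\<^sub>v w"
      using A Cons.prems(1) unfolding w'_def vec_eq_iff by auto
    then have "eigenvector A w a"
      using A Cons.prems(1,2) by (simp add: eigenvector_def)
    moreover have "C *\<^sub>v w = 0\<^sub>v p"
      using Cons.prems(1) Cons.prems(4)[of 0] A by simp
    ultimately show ?thesis
      by blast
  next
    case False
    have "poly_mat_vec A (\<Prod>a\<leftarrow>as. [:- a, 1:]) w'
        = poly_mat_vec A ((\<Prod>a\<leftarrow>as. [:- a, 1:]) * [:- a, 1:]) w"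
      using Cons.prems(1) by (simp only: poly_mat_vec_mult poly_mat_vec_linear_factor w'_def)
    also have "\<dots> = poly_mat_vec A (\<Prod>a\<leftarrow>a # as. [:- a, 1:]) w"
      by (simp only: list.map prod_list.Cons mult.commute)
    finally have "poly_mat_vec A (\<Prod>a\<leftarrow>as. [:- a, 1:]) w' = 0\<^sub>v n"
      using Cons.prems(3) by simp
    moreover have "C *\<^sub>v (A ^\<^sub>m i *\<^sub>v w') = 0\<^sub>v p" if "i < length as" for i
    proof -
      have carrier: "A ^\<^sub>m Suc i *\<^sub>v w \<in> carrier_vec n" "A ^\<^sub>m i *\<^sub>v w \<in> carrier_vec n"
        using A Cons.prems(1) by (metis mult_mat_vec_carrier pow_carrier_mat)+
      have "A ^\<^sub>m i *\<^sub>v w' = A ^\<^sub>m Suc i *\<^sub>v w - a \<cdot>\<^sub>v (A ^\<^sub>m i *\<^sub>v w)"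
        using A Cons.prems(1) unfolding w'_def
        by (simp add: mult_minus_distrib_mat_vec[of _ n n] mult_mat_vec[of _ n n]
            assoc_mult_mat_vec[of _ n n _ n])
      then have "C *\<^sub>v (A ^\<^sub>m i *\<^sub>v w')
          = C *\<^sub>v (A ^\<^sub>m Suc i *\<^sub>v w) - a \<cdot>\<^sub>v (C *\<^sub>v (A ^\<^sub>m i *\<^sub>v w))"
        using carrier by (simp add: mult_minus_distrib_mat_vec[OF C] mult_mat_vec[OF C] del: pow_mat.simps)
      also have "\<dots> = 0\<^sub>v p"
        using Cons.prems(4)[of i] Cons.prems(4)[of "Suc i"] that by (auto simp del: pow_mat.simps)
      finally show ?thesis .
    qed
    ultimately show ?thesis
      using Cons.IH[OF w' False] by blast
  qed
qed

end

lemma (in vec_space) rank_less_dim_col_if_not_distinct: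
  assumes M: "M \<in> carrier_mat n c" and nd: "\<not> distinct (cols M)"
  shows "rank M < c"
proof -
  obtain S where S: "maximal S (\<lambda>T. T \<subseteq> set (cols M) \<and> lin_indpt T)"
    using maximal_exists[of "\<lambda>T. T \<subseteq> set (cols M) \<and> lin_indpt T" "card (set (cols M))" "{}"]
    by (meson List.finite_set card_mono empty_iff empty_subsetI finite_lin_indpt2 rev_finite_subset)
  have "card S \<le> card (set (cols M))"
    using S by (simp add: card_mono maximal_def)
  also have "\<dots> < length (cols M)"
    using nd card_length card_distinct le_neq_implies_less by blast
  finally show ?thesis
    using M rank_card_indpt[OF M S] by simp
qed

lemma kernel_nontrivial_if_not_distinct_cols:
  fixes M :: "'a :: comm_ring_1 mat"
  assumes M: "M \<in> carrier_mat r c" and nd: "\<not> distinct (cols M)"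
  shows "\<exists>x \<in> carrier_vec c. x \<noteq> 0\<^sub>v c \<and> M *\<^sub>v x = 0\<^sub>v r"
proof -
  obtain i j where ij: "i < c" "j < c" "i \<noteq> j" "col M i = col M j"
    using M nd by (auto simp: distinct_conv_nth)
  define x :: "'a vec" where "x = unit_vec c i - unit_vec c j"
  have "x $ i = 1"
    using ij by (simp add: x_def)
  then have "x \<noteq> 0\<^sub>v c"
    using ij(1) by auto
  moreover have "M *\<^sub>v x = 0\<^sub>v r"
  proof (rule eq_vecI)
    fix k
    assume "k < dim_vec (0\<^sub>v r :: 'a vec)"
    then have k: "k < r"
      by simp
    have "(M *\<^sub>v x) $ k = col M i $ k - col M j $ k"
      using M ij(1,2) k unfolding x_def
      by (simp add: scalar_prod_minus_distrib[of _ c])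
    then show "(M *\<^sub>v x) $ k = 0\<^sub>v r $ k"
      using arg_cong[OF ij(4), of "\<lambda>v. v $ k"] k by simp
  qed (use M in simp)
  ultimately show ?thesis
    by (auto simp: x_def)
qed

lemma rank_eq_dim_col_iff_kernel_trivial:
  fixes M :: "'a :: field mat"
  assumes M: "M \<in> carrier_mat r c"
  shows "vec_space.rank r M = c \<longleftrightarrow> (\<forall>x \<in> carrier_vec c. M *\<^sub>v x = 0\<^sub>v r \<longrightarrow> x = 0\<^sub>v c)"
proof -
  interpret V: vec_space "TYPE('a)" r .
  show ?thesis
  proof (cases "distinct (cols M)")
    case True
    have "V.rank M = c \<longleftrightarrow> V.lin_indpt (set (cols M))"
      using V.full_rank_lin_indpt[OF M _ True] V.lin_indpt_full_rank[OF M True] by blast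
    also have "\<dots> \<longleftrightarrow> (\<forall>x \<in> carrier_vec c. M *\<^sub>v x = 0\<^sub>v r \<longrightarrow> x = 0\<^sub>v c)"
      using V.lin_depI[OF M _ _ _ True] V.lin_depE[OF M _ True] by metis
    finally show ?thesis .
  next
    case False
    then show ?thesis
      using V.rank_less_dim_col_if_not_distinct[OF M] kernel_nontrivial_if_not_distinct_cols[OF M]
      by auto
  qed
qed

lemma append_zero_vec: "0\<^sub>v n @\<^sub>v 0\<^sub>v m = 0\<^sub>v (n + m)"
  by (intro eq_vecI) auto

lemma obs_stack_carrier:
  assumes A: "A \<in> carrier_mat n n" and C: "C \<in> carrier_mat p n"
  shows "obs_stack A C k \<in> carrier_mat (Suc k * p) n"
proof (induction k)
  case (Suc k)
  have "C * A ^\<^sub>m Suc k \<in> carrier_mat p n"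
    using A C by (metis mult_carrier_mat pow_carrier_mat)
  from carrier_append_rows[OF Suc this] show ?case
    by (simp add: add.commute)
qed (use C in simp)

lemma obs_stack_mult_vec_eq_0:
  assumes A: "A \<in> carrier_mat n n" and C: "C \<in> carrier_mat p n" and w: "w \<in> carrier_vec n"
    and z: "obs_stack A C k *\<^sub>v w = 0\<^sub>v (Suc k * p)" and i: "i \<le> k"
  shows "C *\<^sub>v (A ^\<^sub>m i *\<^sub>v w) = 0\<^sub>v p"
  using z i
proof (induction k)
  case 0
  then show ?case
    using A w by simp
next
  case (Suc k)
  have S: "obs_stack A C k \<in> carrier_mat (Suc k * p) n"
    by (rule obs_stack_carrier[OF A C])
  have CA: "C * A ^\<^sub>m Suc k \<in> carrier_mat p n"
    using A C by (metis mult_carrier_mat pow_carrier_mat)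
  have "obs_stack A C (Suc k) *\<^sub>v w = (obs_stack A C k *\<^sub>v w) @\<^sub>v ((C * A ^\<^sub>m Suc k) *\<^sub>v w)"
    using mat_mult_append[OF S CA w] by simp
  then have "(obs_stack A C k *\<^sub>v w) @\<^sub>v ((C * A ^\<^sub>m Suc k) *\<^sub>v w) = 0\<^sub>v (Suc k * p) @\<^sub>v 0\<^sub>v p"
    using Suc.prems(1) by (simp add: append_zero_vec add.commute)
  then have z: "obs_stack A C k *\<^sub>v w = 0\<^sub>v (Suc k * p)"
    and z': "(C * A ^\<^sub>m Suc k) *\<^sub>v w = 0\<^sub>v p"
    using append_vec_eq[OF mult_mat_vec_carrier[OF S w] zero_carrier_vec] by blast+
  show ?case
  proof (cases "i \<le> k")
    case True
    then show ?thesis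
      using Suc.IH[OF z] by blast
  next
    case False
    then have "i = Suc k"
      using Suc.prems(2) by simp
    then show ?thesis
      using z' A C w by (simp only: assoc_mult_mat_vec[OF C pow_carrier_mat[OF A] w, symmetric])
  qed
qed

lemma not_observable_imp_unobservable_eigenvector:
  fixes A C :: "complex mat"
  assumes A: "A \<in> carrier_mat n n" and C: "C \<in> carrier_mat p n" and "\<not> observable A C"
  shows "\<exists>lam u. eigenvector A u lam \<and> C *\<^sub>v u = 0\<^sub>v p"
proof -
  have O: "obs_matrix A C \<in> carrier_mat (Suc (n - 1) * p) n"
    using A obs_stack_carrier[OF A C] by (simp add: obs_matrix_def)
  then have "vec_space.rank (Suc (n - 1) * p) (obs_matrix A C) \<noteq> n"
    using assms by (auto simp: observable_def)
  then obtain v where v: "v \<in> carrier_vec n" "v \<noteq> 0\<^sub>v n" "obs_matrix A C *\<^sub>v v = 0\<^sub>v (Suc (n - 1) * p)"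
    using rank_eq_dim_col_iff_kernel_trivial[OF O] by blast
  have z: "obs_stack A C (n - 1) *\<^sub>v v = 0\<^sub>v (Suc (n - 1) * p)"
    using v(3) A unfolding obs_matrix_def by simp
  have ker: "C *\<^sub>v (A ^\<^sub>m i *\<^sub>v v) = 0\<^sub>v p" if "i < n" for i
    by (rule obs_stack_mult_vec_eq_0[OF A C v(1) z]) (use that in linarith)
  obtain q where q: "q \<noteq> 0" "degree q \<le> n" "poly_mat_vec A q v = 0\<^sub>v n"
    using krylov_annihilating_poly[OF A v(1)] by blast
  obtain as where as: "Polynomial.smult (lead_coeff q) (\<Prod>a\<leftarrow>as. [:- a, 1:]) = q"
    and len: "length as = degree q"
    using fundamental_theorem_algebra_factorized[of q] by blast
  define c where "c = lead_coeff q"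
  have c: "c \<noteq> 0"
    using q(1) by (simp add: c_def)
  have q_eq: "q = Polynomial.smult c (\<Prod>a\<leftarrow>as. [:- a, 1:])"
    unfolding c_def by (rule as[symmetric])
  have "poly_mat_vec A (\<Prod>a\<leftarrow>as. [:- a, 1:]) v
      = poly_mat_vec A (Polynomial.smult (inverse c) q) v"
    using c by (simp add: q_eq)
  also have "\<dots> = 0\<^sub>v n"
    using A v(1) q(3) by (auto simp: poly_mat_vec_smult intro!: eq_vecI)
  finally have "poly_mat_vec A (\<Prod>a\<leftarrow>as. [:- a, 1:]) v = 0\<^sub>v n" .
  moreover have "C *\<^sub>v (A ^\<^sub>m i *\<^sub>v v) = 0\<^sub>v p" if "i < length as" for i
    using ker that q(2) len by simp
  ultimately show ?thesis
    by (rule eigenvector_in_kernel_of_annihilated[OF A C v(1,2)])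
qed

lemma four_block_mult_vec_output_injection:
  fixes F Bh K Dh H :: "'a :: field mat"
  assumes F: "F \<in> carrier_mat \<nu> \<nu>" and Bh: "Bh \<in> carrier_mat \<nu> m" and K: "K \<in> carrier_mat p \<nu>"
    and Dh: "Dh \<in> carrier_mat p m" and H: "H \<in> carrier_mat m \<nu>" and u: "u \<in> carrier_vec \<nu>"
  shows "four_block_mat (F - lam \<cdot>\<^sub>m 1\<^sub>m \<nu>) Bh K Dh *\<^sub>v (u @\<^sub>v - (H *\<^sub>v u))
    = ((F - Bh * H) *\<^sub>v u - lam \<cdot>\<^sub>v u) @\<^sub>v ((K - Dh * H) *\<^sub>v u)"
proof -
  have Hu: "H *\<^sub>v u \<in> carrier_vec m"
    using H u by simp
  have "four_block_mat (F - lam \<cdot>\<^sub>m 1\<^sub>m \<nu>) Bh K Dh *\<^sub>v (u @\<^sub>v - (H *\<^sub>v u))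
      = ((F - lam \<cdot>\<^sub>m 1\<^sub>m \<nu>) *\<^sub>v u + Bh *\<^sub>v - (H *\<^sub>v u)) @\<^sub>v (K *\<^sub>v u + Dh *\<^sub>v - (H *\<^sub>v u))"
    using F Hu by (intro four_block_mat_mult_vec[OF _ Bh K Dh u]) auto
  also have "(F - lam \<cdot>\<^sub>m 1\<^sub>m \<nu>) *\<^sub>v u + Bh *\<^sub>v - (H *\<^sub>v u) = (F - Bh * H) *\<^sub>v u - lam \<cdot>\<^sub>v u"
    using F Bh H u Hu
    by (auto simp: minus_mult_distrib_mat_vec[of _ \<nu> \<nu>] intro!: eq_vecI)
  also have "K *\<^sub>v u + Dh *\<^sub>v - (H *\<^sub>v u) = (K - Dh * H) *\<^sub>v u"
    using K Dh H u Hu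
    by (auto simp: minus_mult_distrib_mat_vec[of _ p \<nu>] intro!: eq_vecI)
  finally show ?thesis .
qed

lemma observable_output_injection:
  fixes F Bh K Dh H :: "complex mat"
  assumes F: "F \<in> carrier_mat \<nu> \<nu>" and Bh: "Bh \<in> carrier_mat \<nu> m" and K: "K \<in> carrier_mat p \<nu>"
    and Dh: "Dh \<in> carrier_mat p m" and H: "H \<in> carrier_mat m \<nu>"
    and rank: "\<forall>lam\<in>spectrum (F - Bh * H). full_col_rank (four_block_mat (F - lam \<cdot>\<^sub>m 1\<^sub>m \<nu>) Bh K Dh)"
  shows "observable (F - Bh * H) (K - Dh * H)"
proof (rule ccontr)
  assume "\<not> observable (F - Bh * H) (K - Dh * H)"
  moreover have "F - Bh * H \<in> carrier_mat \<nu> \<nu>" and "K - Dh * H \<in> carrier_mat p \<nu>"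
    using F Bh K Dh H by auto
  ultimately obtain lam u where eig: "eigenvector (F - Bh * H) u lam"
    and ker: "(K - Dh * H) *\<^sub>v u = 0\<^sub>v p"
    using not_observable_imp_unobservable_eigenvector by blast
  have u: "u \<in> carrier_vec \<nu>" "u \<noteq> 0\<^sub>v \<nu>" and Au: "(F - Bh * H) *\<^sub>v u = lam \<cdot>\<^sub>v u"
    using eig Bh by (auto simp: eigenvector_def)
  define M where "M = four_block_mat (F - lam \<cdot>\<^sub>m 1\<^sub>m \<nu>) Bh K Dh"
  have M: "M \<in> carrier_mat (\<nu> + p) (\<nu> + m)"
    unfolding M_def by (intro four_block_carrier_mat[OF _ Dh] minus_carrier_mat smult_carrier_mat one_carrier_mat)
  have "lam \<in> spectrum (F - Bh * H)"
    using eig by (auto simp: spectrum_def eigenvalue_def)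
  then have "vec_space.rank (\<nu> + p) M = \<nu> + m"
    using rank Dh by (auto simp: M_def full_col_rank_def)
  moreover have "M *\<^sub>v (u @\<^sub>v - (H *\<^sub>v u)) = 0\<^sub>v (\<nu> + p)"
    unfolding M_def four_block_mult_vec_output_injection[OF F Bh K Dh H u(1)] Au ker
    using u(1) by (simp add: append_zero_vec)
  ultimately have "u @\<^sub>v - (H *\<^sub>v u) = 0\<^sub>v \<nu> @\<^sub>v 0\<^sub>v m"
    using rank_eq_dim_col_iff_kernel_trivial[OF M] u(1) H by (simp add: append_zero_vec)
  then show False
    using u by simp
qed

theorem theorem4:
  fixes A B C D F H Bh Dh :: "complex mat" and n m p \<nu> :: nat
  assumes "A \<in> carrier_mat n n" and "B \<in> carrier_mat n m" and "C \<in> carrier_mat p n"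
    and "D \<in> carrier_mat p m" and "F \<in> carrier_mat \<nu> \<nu>"
    and "spectrum A \<inter> spectrum F = {}"
    and "H \<in> carrier_mat m \<nu>" and "observable F H"
    and "Bh \<in> carrier_mat \<nu> m" and "Dh \<in> carrier_mat p m"
    and "spectrum (F - Bh * H) \<inter> spectrum F = {}"
    and "\<forall>lam\<in>spectrum (F - Bh * H).
           full_col_rank (four_block_mat (F - lam \<cdot>\<^sub>m 1\<^sub>m \<nu>) Bh (primal_ssc A B C D F H) Dh)"
  shows "observable (F - Bh * H) (primal_ssc A B C D F H - Dh * H)"
proof -
  \<comment> \<open>A matrix sum takes its dimensions from the second summand \<open>D * H\<close>, so no property
      of the Sylvester solution is needed here.\<close>
  have "primal_ssc A B C D F H \<in> carrier_mat p \<nu>"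
    using assms(4,7) unfolding primal_ssc_def carrier_mat_def plus_mat_def by simp
  from observable_output_injection[OF assms(5,9) this assms(10,7,12)] show ?thesis .
qed

end
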